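(* Given a forking problem (with any finite number of alternatives and monotonic preferences given explicitly as total orders) and an assignment $f$, one can decide in polynomial time whether $f$ is stable.
   Context: A forking problem consists of agents $V=\{v_1,\dots,v_n\}$ and a finite set $M$ of alternatives. Each agent $v_i$ has a strict total order $\succ_i$ on $M\times\{1,\dots,n\}$, where $(S,j)$ means being in the community adopting alternative $S$, of size $j$; it is monotonic if $(S,j)\succ_i(S,k)$ for all $S\in M$ and $1\le k<j\le n$. An assignment is a map $f:V\to M$; $v_i$ prefers $f$ to $g$ if $(f(v_i),|f^{-1}(f(v_i))|)\succ_i(g(v_i),|g^{-1}(g(v_i))|)$. An assignment $f$ is stable if there is no assignment $f'\neq f$ such that every agent $v_i$ with $f'(v_i)\neq f(v_i)$ prefers $f'$ to $f$. *)

theory Defs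
  imports Main
begin

text \<open>
  Agents are 0,...,n-1, alternatives are 0,...,m-1 (so M is the finite set {0..<m}).
  A forking problem instance is given explicitly by
    m :: nat                           the number of alternatives,
    P :: (nat \<times> nat) list list        P ! i is the preference order of agent i, written as the
                                       list of all pairs (S,j) in M \<times> {1..n}, best first,
  and an assignment is a list F :: nat list with F ! i the alternative of agent i.
  n = length P = length F.
\<close>

definition valid_instance :: "nat \<Rightarrow> (nat \<times> nat) list list \<Rightarrow> nat list \<Rightarrow> bool" where
  "valid_instance m P F \<longleftrightarrow>
     length P = length F \<and>
     (\<forall>i < length P. distinct (P ! i) \<and> set (P ! i) = {0..<m} \<times> {1..length P}) \<and>
     (\<forall>i < length F. F ! i < m)"

definition prefers :: "(nat \<times> nat) list list \<Rightarrow> nat \<Rightarrow> nat \<times> nat \<Rightarrow> nat \<times> nat \<Rightarrow> bool" where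
  "prefers P i a b \<longleftrightarrow> (\<exists>p q. p < q \<and> q < length (P ! i) \<and> P ! i ! p = a \<and> P ! i ! q = b)"

definition monotonic_prefs :: "nat \<Rightarrow> (nat \<times> nat) list list \<Rightarrow> bool" where
  "monotonic_prefs m P \<longleftrightarrow>
     (\<forall>i < length P. \<forall>S < m. \<forall>j k. 1 \<le> k \<and> k < j \<and> j \<le> length P \<longrightarrow> prefers P i (S, j) (S, k))"

definition comm_size :: "nat list \<Rightarrow> nat \<Rightarrow> nat" where
  "comm_size g v = card {w. w < length g \<and> g ! w = g ! v}"

definition is_assignment :: "nat \<Rightarrow> nat \<Rightarrow> nat list \<Rightarrow> bool" where
  "is_assignment m n g \<longleftrightarrow> length g = n \<and> (\<forall>i < n. g ! i < m)"

definition stable :: "nat \<Rightarrow> (nat \<times> nat) list list \<Rightarrow> nat list \<Rightarrow> bool" where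
  "stable m P F \<longleftrightarrow>
     \<not> (\<exists>g. is_assignment m (length F) g \<and> g \<noteq> F \<and>
            (\<forall>v < length F. g ! v \<noteq> F ! v \<longrightarrow>
               prefers P v (g ! v, comm_size g v) (F ! v, comm_size F v)))"

definition input_size :: "nat \<Rightarrow> (nat \<times> nat) list list \<Rightarrow> nat list \<Rightarrow> nat" where
  "input_size m P F = m + length F + sum_list (map length P)"

fun len :: "'a list \<Rightarrow> nat" where
  "len [] = 0"
| "len (x # xs) = Suc (len xs)"

fun pos_of :: "(nat \<times> nat) list \<Rightarrow> nat \<Rightarrow> nat \<Rightarrow> nat" where
  "pos_of [] a b = 0"
| "pos_of ((x, y) # r) a b = (if x = a \<and> y = b then 0 else Suc (pos_of r a b))"

fun better :: "(nat \<times> nat) list \<Rightarrow> nat \<Rightarrow> nat \<Rightarrow> nat \<Rightarrow> nat \<Rightarrow> bool" where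
  "better L a b c d = (pos_of L a b < pos_of L c d)"

fun count_eq :: "nat list \<Rightarrow> nat \<Rightarrow> nat" where
  "count_eq [] S = 0"
| "count_eq (x # xs) S = (if x = S then Suc (count_eq xs S) else count_eq xs S)"

fun count_movers :: "(nat \<times> nat) list list \<Rightarrow> nat list \<Rightarrow> nat list \<Rightarrow> nat \<Rightarrow> nat \<Rightarrow> nat" where
  "count_movers [] xs F S s = 0"
| "count_movers (L # Ls) [] F S s = 0"
| "count_movers (L # Ls) (x # xs) F S s =
     (if x \<noteq> S \<and> better L S s x (count_eq F x)
      then Suc (count_movers Ls xs F S s) else count_movers Ls xs F S s)"

fun blockS :: "(nat \<times> nat) list list \<Rightarrow> nat list \<Rightarrow> nat \<Rightarrow> nat \<Rightarrow> nat \<Rightarrow> bool" where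
  "blockS P F S c 0 = False"
| "blockS P F S c (Suc k) = (Suc k \<le> count_movers P F F S (c + Suc k) \<or> blockS P F S c k)"

fun blockAny :: "(nat \<times> nat) list list \<Rightarrow> nat list \<Rightarrow> nat \<Rightarrow> bool" where
  "blockAny P F 0 = False"
| "blockAny P F (Suc S) = (blockS P F S (count_eq F S) (len F) \<or> blockAny P F S)"

fun decide_stable :: "nat \<Rightarrow> (nat \<times> nat) list list \<Rightarrow> nat list \<Rightarrow> bool" where
  "decide_stable m P F = (\<not> blockAny P F m)"

text \<open>
  Written by hand, following the translation of Nipkow et al. (Functional Data Structures and
  Algorithms, Sec. 1.5, as implemented by the time_fun command of HOL-Library): every call of a
  user-defined function costs 1 plus the cost of the user-defined calls it makes; constructors
  and the primitive operations +, <, \<le>, =, \<not>, \<and>, \<or> on natural numbers cost 0 (unit-cost RAM).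
  All calls occurring in a defining equation are counted (strict evaluation).
\<close>

fun T_len :: "'a list \<Rightarrow> nat" where
  "T_len [] = 1"
| "T_len (x # xs) = T_len xs + 1"

fun T_pos_of :: "(nat \<times> nat) list \<Rightarrow> nat \<Rightarrow> nat \<Rightarrow> nat" where
  "T_pos_of [] a b = 1"
| "T_pos_of ((x, y) # r) a b = (if x = a \<and> y = b then 1 else T_pos_of r a b + 1)"

fun T_better :: "(nat \<times> nat) list \<Rightarrow> nat \<Rightarrow> nat \<Rightarrow> nat \<Rightarrow> nat \<Rightarrow> nat" where
  "T_better L a b c d = T_pos_of L a b + T_pos_of L c d + 1"

fun T_count_eq :: "nat list \<Rightarrow> nat \<Rightarrow> nat" where
  "T_count_eq [] S = 1"
| "T_count_eq (x # xs) S = T_count_eq xs S + 1"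

fun T_count_movers :: "(nat \<times> nat) list list \<Rightarrow> nat list \<Rightarrow> nat list \<Rightarrow> nat \<Rightarrow> nat \<Rightarrow> nat" where
  "T_count_movers [] xs F S s = 1"
| "T_count_movers (L # Ls) [] F S s = 1"
| "T_count_movers (L # Ls) (x # xs) F S s =
     T_count_eq F x + T_better L S s x (count_eq F x) + T_count_movers Ls xs F S s + 1"

fun T_blockS :: "(nat \<times> nat) list list \<Rightarrow> nat list \<Rightarrow> nat \<Rightarrow> nat \<Rightarrow> nat \<Rightarrow> nat" where
  "T_blockS P F S c 0 = 1"
| "T_blockS P F S c (Suc k) = T_count_movers P F F S (c + Suc k) + T_blockS P F S c k + 1"

fun T_blockAny :: "(nat \<times> nat) list list \<Rightarrow> nat list \<Rightarrow> nat \<Rightarrow> nat" where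
  "T_blockAny P F 0 = 1"
| "T_blockAny P F (Suc S) =
     T_count_eq F S + T_len F + T_blockS P F S (count_eq F S) (len F) + T_blockAny P F S + 1"

fun T_decide_stable :: "nat \<Rightarrow> (nat \<times> nat) list list \<Rightarrow> nat list \<Rightarrow> nat" where
  "T_decide_stable m P F = T_blockAny P F m + 1"

end

theory Submission
  imports Defs
begin

text \<open>
  If a deviation g blocks F, let S be the alternative of some agent that moves. Let C be the
  agents already at S and X the agents moving to S; in g each agent of X sits in a community of
  size at most |C| + |X|, so by monotonicity it also prefers (S, |C| + |X|) to its position under F.
  Conversely, if k agents outside S prefer (S, |C| + k) to their position, moving exactly them to S
  is a blocking deviation. Hence F is stable iff no alternative S and no k \<le> n admit k such agents,
  which the procedure checks with O(m n) counts, each taking O(n (n + |P|)) steps.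
\<close>

lemma pos_of_less_length: "(a, b) \<in> set L \<Longrightarrow> pos_of L a b < length L"
  by (induction L a b rule: pos_of.induct) auto

lemma nth_pos_of: "(a, b) \<in> set L \<Longrightarrow> L ! pos_of L a b = (a, b)"
  by (induction L a b rule: pos_of.induct) auto

lemma pos_of_not_mem: "(a, b) \<notin> set L \<Longrightarrow> pos_of L a b = length L"
  by (induction L a b rule: pos_of.induct) auto

lemma pos_of_nth: "distinct L \<Longrightarrow> p < length L \<Longrightarrow> L ! p = (a, b) \<Longrightarrow> pos_of L a b = p"
  by (metis nth_eq_iff_index_eq nth_mem pos_of_less_length nth_pos_of)

lemma prefers_iff_pos_of:
  assumes "distinct (P ! i)"
  shows "prefers P i (a, b) (c, d) \<longleftrightarrow>
    (a, b) \<in> set (P ! i) \<and> (c, d) \<in> set (P ! i) \<and> pos_of (P ! i) a b < pos_of (P ! i) c d"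
proof
  assume "prefers P i (a, b) (c, d)"
  then obtain p q where pq: "p < q" "q < length (P ! i)" "P ! i ! p = (a, b)" "P ! i ! q = (c, d)"
    unfolding prefers_def by blast
  then have "(a, b) \<in> set (P ! i)" "(c, d) \<in> set (P ! i)"
    using nth_mem[of p "P ! i"] nth_mem[of q "P ! i"] by auto
  moreover have "pos_of (P ! i) a b = p" "pos_of (P ! i) c d = q"
    using pq pos_of_nth[OF assms] by auto
  ultimately show "(a, b) \<in> set (P ! i) \<and> (c, d) \<in> set (P ! i) \<and>
      pos_of (P ! i) a b < pos_of (P ! i) c d"
    using \<open>p < q\<close> by simp
next
  assume "(a, b) \<in> set (P ! i) \<and> (c, d) \<in> set (P ! i) \<and> pos_of (P ! i) a b < pos_of (P ! i) c d"
  then show "prefers P i (a, b) (c, d)"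
    unfolding prefers_def using pos_of_less_length nth_pos_of by blast
qed

lemma better_iff_prefers:
  assumes "distinct (P ! i)" "(c, d) \<in> set (P ! i)"
  shows "better (P ! i) a b c d \<longleftrightarrow> prefers P i (a, b) (c, d)"
proof (cases "(a, b) \<in> set (P ! i)")
  case False
  then show ?thesis
    using prefers_iff_pos_of[OF assms(1)] pos_of_not_mem pos_of_less_length[OF assms(2)] by simp
qed (use prefers_iff_pos_of[OF assms(1)] assms(2) in simp)

lemma prefers_trans:
  assumes "distinct (P ! i)" "prefers P i x y" "prefers P i y z"
  shows "prefers P i x z"
  using assms prefers_iff_pos_of[OF assms(1)] by (cases x; cases y; cases z) auto

lemma monotonic_prefsD:
  "monotonic_prefs m P \<Longrightarrow> i < length P \<Longrightarrow> S < m \<Longrightarrow> 1 \<le> k \<Longrightarrow> k < j \<Longrightarrow> j \<le> length P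
    \<Longrightarrow> prefers P i (S, j) (S, k)"
  by (simp add: monotonic_prefs_def)

definition community :: "nat list \<Rightarrow> nat \<Rightarrow> nat set" where
  "community g S = {w. w < length g \<and> g ! w = S}"

definition joiners :: "(nat \<times> nat) list list \<Rightarrow> nat list \<Rightarrow> nat \<Rightarrow> nat \<Rightarrow> nat set" where
  "joiners P F S s = {v. v < length F \<and> F ! v \<noteq> S \<and> prefers P v (S, s) (F ! v, comm_size F v)}"

lemma finite_community [simp]: "finite (community g S)"
  by (simp add: community_def)

lemma finite_joiners [simp]: "finite (joiners P F S s)"
  by (simp add: joiners_def)

lemma comm_size_eq_card_community: "comm_size g v = card (community g (g ! v))"
  by (simp add: comm_size_def community_def)

lemma comm_size_pos:
  assumes "v < length g"
  shows "1 \<le> comm_size g v"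
proof -
  have "community g (g ! v) \<noteq> {}" using assms by (auto simp: community_def)
  then show ?thesis by (simp add: comm_size_eq_card_community Suc_le_eq card_gt_0_iff)
qed

lemma card_community_le: "card (community g S) \<le> length g"
  by (rule order.trans[OF card_mono[of "{..<length g}"]]) (auto simp: community_def)

lemma position_in_preference_list:
  assumes valid: "valid_instance m P F" and "v < length F"
  shows "(F ! v, comm_size F v) \<in> set (P ! v)"
proof -
  have "set (P ! v) = {0..<m} \<times> {1..length F}" "F ! v < m"
    using valid \<open>v < length F\<close> by (auto simp: valid_instance_def)
  moreover have "1 \<le> comm_size F v" "comm_size F v \<le> length F"
    using comm_size_pos[OF \<open>v < length F\<close>] card_community_le
    by (auto simp: comm_size_eq_card_community)
  ultimately show ?thesis by simp
qed

definition attracts :: "(nat \<times> nat) list list \<Rightarrow> nat list \<Rightarrow> nat \<Rightarrow> nat \<Rightarrow> bool" where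
  "attracts P F S k \<longleftrightarrow>
     1 \<le> k \<and> k \<le> length F \<and> k \<le> card (joiners P F S (card (community F S) + k))"

lemma prefers_larger_community:
  assumes valid: "valid_instance m P F" and mono: "monotonic_prefs m P"
    and "v < length F" "S < m" "1 \<le> j" "j \<le> s" "s \<le> length F"
    and "prefers P v (S, j) x"
  shows "prefers P v (S, s) x"
proof (cases "j = s")
  case False
  have "length P = length F" "distinct (P ! v)"
    using valid \<open>v < length F\<close> by (auto simp: valid_instance_def)
  then have "prefers P v (S, s) (S, j)"
    using monotonic_prefsD[OF mono, of v S j s] False assms(3-7) by simp
  then show ?thesis using prefers_trans \<open>distinct (P ! v)\<close> assms(8) by blast
qed (use assms in simp)

lemma not_stable_imp_attracts:
  assumes valid: "valid_instance m P F" and mono: "monotonic_prefs m P" and "\<not> stable m P F"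
  shows "\<exists>S<m. \<exists>k. attracts P F S k"
proof -
  let ?n = "length F"
  obtain g where g: "is_assignment m ?n g" "g \<noteq> F"
    and improves: "\<forall>v<?n. g ! v \<noteq> F ! v \<longrightarrow>
      prefers P v (g ! v, comm_size g v) (F ! v, comm_size F v)"
    using assms(3) unfolding stable_def by blast
  have length_g: "length g = ?n" using g(1) by (simp add: is_assignment_def)
  obtain v0 where v0: "v0 < ?n" "g ! v0 \<noteq> F ! v0"
    using g(2) length_g nth_equalityI by metis
  define S where "S = g ! v0"
  have "S < m" using g(1) v0 by (simp add: is_assignment_def S_def)
  define C where "C = community F S"
  define X where "X = {v. v < ?n \<and> g ! v = S \<and> F ! v \<noteq> S}"
  define k where "k = card X"
  have "finite X" by (simp add: X_def)
  have "v0 \<in> X" using v0 by (simp add: X_def S_def)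
  then have "1 \<le> k" using \<open>finite X\<close> by (auto simp: k_def Suc_le_eq card_gt_0_iff)
  have card_CX: "card (C \<union> X) = card C + k"
    unfolding k_def by (rule card_Un_disjoint) (auto simp: C_def X_def community_def)
  have "card (C \<union> X) \<le> ?n"
    by (rule order.trans[OF card_mono[of "{..<?n}"]]) (auto simp: C_def X_def community_def)
  then have "card C + k \<le> ?n" using card_CX by simp
  have "X \<subseteq> joiners P F S (card C + k)"
  proof
    fix v assume "v \<in> X"
    then have v: "v < ?n" "g ! v = S" "F ! v \<noteq> S" by (auto simp: X_def)
    have "community g S \<subseteq> C \<union> X"
      using length_g by (auto simp: C_def X_def community_def)
    then have "comm_size g v \<le> card C + k"
      using card_CX card_mono[of "C \<union> X" "community g S"] \<open>finite X\<close> v(2)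
      by (simp add: C_def comm_size_eq_card_community)
    moreover have "1 \<le> comm_size g v" using comm_size_pos v(1) length_g by simp
    moreover have "prefers P v (S, comm_size g v) (F ! v, comm_size F v)"
      using improves v by metis
    ultimately have "prefers P v (S, card C + k) (F ! v, comm_size F v)"
      using prefers_larger_community[OF valid mono v(1) \<open>S < m\<close>] \<open>card C + k \<le> ?n\<close> by blast
    then show "v \<in> joiners P F S (card C + k)" using v by (simp add: joiners_def)
  qed
  then have "k \<le> card (joiners P F S (card C + k))"
    unfolding k_def by (simp add: card_mono)
  then have "attracts P F S k"
    using \<open>1 \<le> k\<close> \<open>card C + k \<le> ?n\<close> by (simp add: attracts_def C_def)
  then show ?thesis using \<open>S < m\<close> by blast
qed

lemma attracts_imp_not_stable:
  assumes valid: "valid_instance m P F" and "S < m" and "attracts P F S k"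
  shows "\<not> stable m P F"
proof -
  let ?n = "length F"
  define C where "C = community F S"
  have "1 \<le> k" "k \<le> card (joiners P F S (card C + k))"
    using assms(3) by (simp_all add: attracts_def C_def)
  then obtain X where X: "X \<subseteq> joiners P F S (card C + k)" "card X = k" "finite X"
    using obtain_subset_with_card_n by metis
  have joins: "v < ?n \<and> F ! v \<noteq> S \<and> prefers P v (S, card C + k) (F ! v, comm_size F v)"
    if "v \<in> X" for v
    using X(1) that by (auto simp: joiners_def)
  define g where "g = map (\<lambda>v. if v \<in> X then S else F ! v) [0..<?n]"
  have length_g: "length g = ?n" by (simp add: g_def)
  have g_nth: "g ! v = (if v \<in> X then S else F ! v)" if "v < ?n" for v
    using that by (simp add: g_def)
  have "C \<inter> X = {}" using joins by (auto simp: C_def community_def)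
  moreover have "community g S = C \<union> X"
    using length_g g_nth joins by (auto simp: C_def community_def)
  ultimately have "card (community g S) = card C + k"
    using card_Un_disjoint[of C X] X(2,3) by (simp add: C_def)
  then have improves: "\<forall>v<?n. g ! v \<noteq> F ! v \<longrightarrow>
      prefers P v (g ! v, comm_size g v) (F ! v, comm_size F v)"
    using g_nth joins by (auto simp: comm_size_eq_card_community)
  have "is_assignment m ?n g"
    using length_g g_nth \<open>S < m\<close> valid unfolding is_assignment_def valid_instance_def by auto
  moreover obtain v0 where "v0 \<in> X"
    using X(2) \<open>1 \<le> k\<close> by (metis card.empty ex_in_conv not_one_le_zero)
  then have "g \<noteq> F" using joins[of v0] g_nth[of v0] by auto
  ultimately show ?thesis using improves unfolding stable_def by blast
qed

lemma not_stable_iff_attracts: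
  assumes "valid_instance m P F" "monotonic_prefs m P"
  shows "\<not> stable m P F \<longleftrightarrow> (\<exists>S<m. \<exists>k. attracts P F S k)"
  using not_stable_imp_attracts[OF assms] attracts_imp_not_stable[OF assms(1)] by blast

lemma len_eq_length: "len xs = length xs"
  by (induction xs) auto

lemma count_eq_eq_card_community: "count_eq xs S = card (community xs S)"
proof -
  have "count_eq xs S = length (filter (\<lambda>y. y = S) xs)" by (induction xs) auto
  then show ?thesis by (simp add: length_filter_conv_card community_def)
qed

lemma count_movers_eq_card:
  assumes "length Ls = length xs"
  shows "count_movers Ls xs F S s =
    card {v. v < length xs \<and> xs ! v \<noteq> S \<and> better (Ls ! v) S s (xs ! v) (count_eq F (xs ! v))}"
proof -
  have filter: "count_movers Ls xs F S s =
      length (filter (\<lambda>(L, x). x \<noteq> S \<and> better L S s x (count_eq F x)) (zip Ls xs))"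
    by (induction Ls xs F S s rule: count_movers.induct) auto
  show ?thesis
    unfolding filter length_filter_conv_card using assms
    by (intro arg_cong[where f = card]) (auto simp del: better.simps)
qed

lemma count_movers_eq_card_joiners:
  assumes valid: "valid_instance m P F"
  shows "count_movers P F F S s = card (joiners P F S s)"
proof -
  have "length P = length F" using valid by (simp add: valid_instance_def)
  moreover have "better (P ! v) S s (F ! v) (count_eq F (F ! v)) \<longleftrightarrow>
      prefers P v (S, s) (F ! v, comm_size F v)" if "v < length F" for v
    using better_iff_prefers position_in_preference_list[OF valid that] valid that
    by (simp add: count_eq_eq_card_community comm_size_eq_card_community valid_instance_def
        del: better.simps)
  ultimately show ?thesis
    unfolding count_movers_eq_card[OF \<open>length P = length F\<close>] joiners_def
    by (metis (no_types, lifting))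
qed

lemma blockS_iff: "blockS P F S c n \<longleftrightarrow> (\<exists>k. 1 \<le> k \<and> k \<le> n \<and> k \<le> count_movers P F F S (c + k))"
  by (induction n) (auto simp: le_Suc_eq)

lemma blockAny_iff: "blockAny P F m \<longleftrightarrow> (\<exists>S<m. blockS P F S (count_eq F S) (len F))"
  by (induction m) (auto simp: less_Suc_eq)

lemma decide_stable_iff:
  assumes "valid_instance m P F"
  shows "decide_stable m P F \<longleftrightarrow> \<not> (\<exists>S<m. \<exists>k. attracts P F S k)"
  by (simp add: blockAny_iff blockS_iff len_eq_length count_eq_eq_card_community
      count_movers_eq_card_joiners[OF assms] attracts_def del: better.simps)

theorem decide_stable_correct:
  assumes "valid_instance m P F" "monotonic_prefs m P"
  shows "decide_stable m P F = stable m P F"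
  using decide_stable_iff[OF assms(1)] not_stable_iff_attracts[OF assms] by argo

lemma T_pos_of_le: "T_pos_of L a b \<le> length L + 1"
  by (induction L a b rule: T_pos_of.induct) auto

lemma T_count_eq_eq: "T_count_eq xs S = length xs + 1"
  by (induction xs) auto

lemma T_len_eq: "T_len xs = length xs + 1"
  by (induction xs) auto

lemma T_count_movers_le:
  "\<forall>L\<in>set Ls. length L \<le> B \<Longrightarrow>
    T_count_movers Ls xs F S s \<le> (length Ls + 1) * (length F + 2 * B + 5)"
proof (induction Ls xs F S s rule: T_count_movers.induct)
  case (3 L Ls x xs F S s)
  have T_pos: "T_pos_of L a b \<le> B + 1" for a b
    using T_pos_of_le[of L a b] "3.prems" by fastforce
  have "T_better L S s x (count_eq F x) \<le> 2 * B + 3"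
    using add_mono[OF T_pos[of S s] T_pos[of x "count_eq F x"]] by simp
  with 3 show ?case by (simp add: T_count_eq_eq)
qed auto

lemma T_blockS_le:
  "\<forall>s. T_count_movers P F F S s \<le> X \<Longrightarrow> T_blockS P F S c k \<le> (k + 1) * (X + 1)"
proof (induction k)
  case (Suc k)
  then have "T_count_movers P F F S (c + Suc k) \<le> X" "T_blockS P F S c k \<le> (k + 1) * (X + 1)"
    by blast+
  then show ?case by simp
qed simp

lemma T_blockAny_le:
  "\<forall>S c. T_blockS P F S c (length F) \<le> Y \<Longrightarrow>
    T_blockAny P F m \<le> (m + 1) * (2 * length F + Y + 3)"
proof (induction m)
  case (Suc m)
  then have "T_blockS P F m (count_eq F m) (length F) \<le> Y"
    "T_blockAny P F m \<le> (m + 1) * (2 * length F + Y + 3)"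
    by blast+
  then show ?case by (simp add: T_count_eq_eq T_len_eq len_eq_length)
qed simp

lemma T_decide_stable_le:
  assumes "length P = length F"
  shows "T_decide_stable m P F \<le> 79 * (input_size m P F + 1) ^ 4"
proof -
  define N where "N = input_size m P F + 1"
  have "1 \<le> N" "length F \<le> N" "m \<le> N" by (auto simp: N_def input_size_def)
  then have "N + 1 \<le> 2 * N" by simp
  have "length L \<le> sum_list (map length P)" if "L \<in> set P" for L
    using that by (simp add: member_le_sum_list)
  then have "\<forall>L\<in>set P. length L \<le> N" by (fastforce simp: N_def input_size_def)
  then have "T_count_movers P F F S s \<le> (length P + 1) * (length F + 2 * N + 5)" for S s
    by (rule T_count_movers_le)
  also have "\<dots> \<le> (N + 1) * (3 * N + 5)"
    using assms \<open>length F \<le> N\<close> by (intro mult_le_mono) auto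
  also have "\<dots> \<le> 2 * N * (8 * N)"
    using \<open>1 \<le> N\<close> \<open>N + 1 \<le> 2 * N\<close> by (intro mult_le_mono) auto
  finally have "T_blockS P F S c (length F) \<le> (length F + 1) * (16 * N ^ 2 + 1)" for S c
    by (intro T_blockS_le) (simp add: power2_eq_square)
  also have "\<dots> \<le> 2 * N * (17 * N ^ 2)"
    using \<open>1 \<le> N\<close> \<open>length F \<le> N\<close> by (intro mult_le_mono) auto
  finally have "T_blockAny P F m \<le> (m + 1) * (2 * length F + 34 * N ^ 3 + 3)"
    by (intro T_blockAny_le) (simp add: power2_eq_square power3_eq_cube mult.assoc)
  also have "\<dots> \<le> 2 * N * (39 * N ^ 3)"
  proof (intro mult_le_mono)
    have "N \<le> N ^ 3" "1 \<le> N ^ 3" using \<open>1 \<le> N\<close> by (simp_all add: power3_eq_cube)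
    then show "2 * length F + 34 * N ^ 3 + 3 \<le> 39 * N ^ 3" using \<open>length F \<le> N\<close> by linarith
  qed (use \<open>m \<le> N\<close> \<open>1 \<le> N\<close> in simp)
  finally have "T_decide_stable m P F \<le> 78 * N ^ 4 + 1"
    by (simp add: power3_eq_cube power4_eq_xxxx)
  also have "\<dots> \<le> 79 * N ^ 4" using \<open>1 \<le> N\<close> by simp
  finally show ?thesis by (simp add: N_def)
qed

theorem proposition4:
  "\<exists>c d :: nat. \<forall>m P F.
     valid_instance m P F \<and> monotonic_prefs m P \<longrightarrow>
       decide_stable m P F = stable m P F \<and>
       T_decide_stable m P F \<le> c * (input_size m P F + 1) ^ d"
proof (intro exI allI impI conjI)
  fix m P F
  assume "valid_instance m P F \<and> monotonic_prefs m P"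
  then show "decide_stable m P F = stable m P F"
    and "T_decide_stable m P F \<le> 79 * (input_size m P F + 1) ^ 4"
    using decide_stable_correct T_decide_stable_le by (auto simp: valid_instance_def)
qed

end
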